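(* Let $\mathfrak g\xrightarrow{\mu}\mathfrak h$ be a crossed module of Lie algebras, $\phi:W\to V$ linear, $\rho$ a 2-representation on $\phi$. Let $\omega\in\bigwedge^q\mathfrak g_p^*\otimes V$ and $\Xi=(\xi_0,\dots,\xi_q)\in\mathfrak g_{p+1}^{q+1}$ with $\xi_j=(x_j^0,\dots,x_j^p;y_j)$. Then $$\delta\partial\omega(\Xi)=\partial\delta\omega(\Xi)+\phi\Big(\sum_{j=0}^q(-1)^j\rho_1(x_j^0)\omega(\partial_0\Xi(j))\Big)=\partial\delta\omega(\Xi)+\Delta\delta_{(1)}\omega(\Xi).$$
   Context: Crossed module: Lie algebras $\mathfrak g,\mathfrak h$, Lie homomorphism $\mu$, action $\mathcal L:\mathfrak h\to\mathrm{Der}(\mathfrak g)$ with $\mu(\mathcal L_yx)=[y,\mu(x)]$, $\mathcal L_{\mu(x_0)}x_1=[x_0,x_1]$; $\mathfrak g\oplus_{\mathcal L}\mathfrak h$ has bracket $[(x_0,y_0),(x_1,y_1)]=([x_0,x_1]+\mathcal L_{y_0}x_1-\mathcal L_{y_1}x_0,[y_0,y_1])$. 2-representation: linear $\rho_0^1:\mathfrak h\to\mathfrak{gl}(W)$, $\rho_0^0:\mathfrak h\to\mathfrak{gl}(V)$, $\rho_1:\mathfrak g\to\mathrm{Hom}(V,W)$ with $\rho_0^1,\rho_0^0$ representations, $\phi\rho_0^1(y)=\rho_0^0(y)\phi$, $\rho_1([x_0,x_1])=\rho_1(x_0)\phi\rho_1(x_1)-\rho_1(x_1)\phi\rho_1(x_0)$,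 $\rho_0^0(\mu(x))=\phi\rho_1(x)$, $\rho_0^1(\mu(x))=\rho_1(x)\phi$, $\rho_1(\mathcal L_yx)=\rho_0^1(y)\rho_1(x)-\rho_1(x)\rho_0^0(y)$. $\mathfrak g_0=\mathfrak h$; for $p\ge1$, $\mathfrak g_p=\mathfrak g^p\oplus\mathfrak h$, elements $(x^0,\dots,x^{p-1};y)$, a Lie algebra via identification with composable strings $(a_0,\dots,a_{p-1})\in(\mathfrak g\oplus_{\mathcal L}\mathfrak h)^p$, $a_j=(x^j,y+\sum_{k>j}\mu(x^k))$, componentwise bracket. Face maps $\partial_k:\mathfrak g_{p+1}\to\mathfrak g_p$: $\partial_0(x^0,\dots,x^p;y)=(x^1,\dots,x^p;y)$, $\partial_k(\dots)=(x^0,\dots,x^{k-1}+x^k,\dots,x^p;y)$ ($0<k\le p$), $\partial_{p+1}(\dots)=(x^0,\dots,x^{p-1};y+\mu(x^p))$, applied componentwise to tuples; $\hat t_p(x^0,\dots,x^{p-1};y)=y+\sum\mu(x^j)$. $X(j),X(m,n)$: removal of entries. $C^{p,q}_0=\bigwedge^q\mathfrak g_p^*\otimes V$, $C^{p,q}_1=\bigwedge^q\mathfrak g_p^*\otimes\mathfrak g^*\otimes W$. $\delta:C^{p,q}_0\to C^{p,q+1}_0$ is the Chevalley–Eilenberg differential of $\mathfrak g_p$ with values in $V$ for the representation $\rho_0^0\circ\hat t_p$: $\delta\omega(\xi_0,\dots,\xi_q)=\sum_j(-1)^j\rho_0^0(\hat t_p(\xi_j))\omega(\Xi(j))+\sum_{m<n}(-1)^{m+n}\omega([\xi_m,\xi_n],\Xi(m,n))$.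 $\partial\omega(\Xi)=\sum_{k=0}^{p+1}(-1)^k\omega(\partial_k\Xi)$. $\delta_{(1)}:C^{p,q}_0\to C^{p,q}_1$, $\delta_{(1)}\omega(\Xi;x)=\rho_1(x)\omega(\Xi)$. $\Delta:C^{p,q}_1\to C^{p+1,q+1}_0$, $\Delta\beta(\xi_0,\dots,\xi_q)=\phi\big(\sum_j(-1)^j\beta(\partial_0\Xi(j);x_j^0)\big)$. *)

theory Defs
  imports "HOL-Analysis.Analysis"
begin

definition lie_algebra :: "('a::real_vector \<Rightarrow> 'a \<Rightarrow> 'a) \<Rightarrow> bool" where
  "lie_algebra br \<longleftrightarrow> bilinear br \<and> (\<forall>x. br x x = 0) \<and>
     (\<forall>x y z. br x (br y z) + br y (br z x) + br z (br x y) = 0)"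

definition lie_hom ::
  "('a::real_vector \<Rightarrow> 'a \<Rightarrow> 'a) \<Rightarrow> ('b::real_vector \<Rightarrow> 'b \<Rightarrow> 'b) \<Rightarrow> ('a \<Rightarrow> 'b) \<Rightarrow> bool" where
  "lie_hom ba bb f \<longleftrightarrow> linear f \<and> (\<forall>x y. f (ba x y) = bb (f x) (f y))"

definition representation ::
  "('h::real_vector \<Rightarrow> 'h \<Rightarrow> 'h) \<Rightarrow> ('h \<Rightarrow> 'v::real_vector \<Rightarrow> 'v) \<Rightarrow> bool" where
  "representation bh r \<longleftrightarrow> (\<forall>v. linear (\<lambda>y. r y v)) \<and> (\<forall>y. linear (r y)) \<and>
     (\<forall>y0 y1 v. r (bh y0 y1) v = r y0 (r y1 v) - r y1 (r y0 v))"

definition crossed_module ::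
  "('g::real_vector \<Rightarrow> 'g \<Rightarrow> 'g) \<Rightarrow> ('h::real_vector \<Rightarrow> 'h \<Rightarrow> 'h) \<Rightarrow> ('g \<Rightarrow> 'h)
   \<Rightarrow> ('h \<Rightarrow> 'g \<Rightarrow> 'g) \<Rightarrow> bool" where
  "crossed_module bg bh \<mu> L \<longleftrightarrow>
     lie_algebra bg \<and> lie_algebra bh \<and> lie_hom bg bh \<mu> \<and>
     \<comment> \<open>L is a Lie algebra morphism h \<rightarrow> Der(g)\<close>
     (\<forall>x. linear (\<lambda>y. L y x)) \<and> (\<forall>y. linear (L y)) \<and>
     (\<forall>y x0 x1. L y (bg x0 x1) = bg (L y x0) x1 + bg x0 (L y x1)) \<and>
     (\<forall>y0 y1 x. L (bh y0 y1) x = L y0 (L y1 x) - L y1 (L y0 x)) \<and>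
     (\<forall>y x. \<mu> (L y x) = bh y (\<mu> x)) \<and>
     (\<forall>x0 x1. L (\<mu> x0) x1 = bg x0 x1)"

definition two_representation ::
  "('g::real_vector \<Rightarrow> 'g \<Rightarrow> 'g) \<Rightarrow> ('h::real_vector \<Rightarrow> 'h \<Rightarrow> 'h) \<Rightarrow> ('g \<Rightarrow> 'h)
   \<Rightarrow> ('h \<Rightarrow> 'g \<Rightarrow> 'g) \<Rightarrow> ('w::real_vector \<Rightarrow> 'v::real_vector)
   \<Rightarrow> ('h \<Rightarrow> 'w \<Rightarrow> 'w) \<Rightarrow> ('h \<Rightarrow> 'v \<Rightarrow> 'v) \<Rightarrow> ('g \<Rightarrow> 'v \<Rightarrow> 'w) \<Rightarrow> bool" where
  "two_representation bg bh \<mu> L \<phi> r01 r00 r1 \<longleftrightarrow>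
     linear \<phi> \<and> (\<forall>v. linear (\<lambda>x. r1 x v)) \<and> (\<forall>x. linear (r1 x)) \<and>
     representation bh r01 \<and> representation bh r00 \<and>
     (\<forall>y w. \<phi> (r01 y w) = r00 y (\<phi> w)) \<and>
     (\<forall>x0 x1 v. r1 (bg x0 x1) v = r1 x0 (\<phi> (r1 x1 v)) - r1 x1 (\<phi> (r1 x0 v))) \<and>
     (\<forall>x v. r00 (\<mu> x) v = \<phi> (r1 x v)) \<and>
     (\<forall>x w. r01 (\<mu> x) w = r1 x (\<phi> w)) \<and>
     (\<forall>y x v. r1 (L y x) v = r01 y (r1 x v) - r1 x (r00 y v))"

text \<open>An element (x^0,...,x^{p-1};y) of g_p is represented as the pair (xs, y)
  with xs a list of length p.  g_0 = h corresponds to ([], y).\<close>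

definition gp_carrier :: "nat \<Rightarrow> ('g list \<times> 'h) set" where
  "gp_carrier p = {\<xi>. length (fst \<xi>) = p}"

definition gp_add :: "('g::real_vector list \<times> 'h::real_vector) \<Rightarrow> ('g list \<times> 'h) \<Rightarrow> ('g list \<times> 'h)" where
  "gp_add a b = (map2 (+) (fst a) (fst b), snd a + snd b)"

definition gp_scale :: "real \<Rightarrow> ('g::real_vector list \<times> 'h::real_vector) \<Rightarrow> ('g list \<times> 'h)" where
  "gp_scale c a = (map (scaleR c) (fst a), c *\<^sub>R snd a)"

definition sd_bracket ::
  "('g::real_vector \<Rightarrow> 'g \<Rightarrow> 'g) \<Rightarrow> ('h::real_vector \<Rightarrow> 'h \<Rightarrow> 'h) \<Rightarrow> ('h \<Rightarrow> 'g \<Rightarrow> 'g)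
   \<Rightarrow> ('g \<times> 'h) \<Rightarrow> ('g \<times> 'h) \<Rightarrow> ('g \<times> 'h)" where
  "sd_bracket bg bh L a b =
     (bg (fst a) (fst b) + L (snd a) (fst b) - L (snd b) (fst a), bh (snd a) (snd b))"

text \<open>Identification of (x^0,...,x^{p-1};y) with the composable string
  (a_0,...,a_{p-1}), a_j = (x^j, y + sum_{k>j} mu(x^k)).\<close>
definition to_string :: "('g \<Rightarrow> 'h::real_vector) \<Rightarrow> ('g list \<times> 'h) \<Rightarrow> ('g \<times> 'h) list" where
  "to_string \<mu> \<xi> = map (\<lambda>j. (fst \<xi> ! j, snd \<xi> + (\<Sum>k\<in>{j<..<length (fst \<xi>)}. \<mu> (fst \<xi> ! k))))
                      [0..<length (fst \<xi>)]"

text \<open>Bracket on g_p transported from the componentwise bracket of strings: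
  the g-components are those of the componentwise bracket, and the h-component
  (that of the last entry of the string, resp. the h-bracket when p = 0) is [y,y'].\<close>
definition gp_bracket ::
  "('g::real_vector \<Rightarrow> 'g \<Rightarrow> 'g) \<Rightarrow> ('h::real_vector \<Rightarrow> 'h \<Rightarrow> 'h) \<Rightarrow> ('g \<Rightarrow> 'h) \<Rightarrow> ('h \<Rightarrow> 'g \<Rightarrow> 'g)
   \<Rightarrow> ('g list \<times> 'h) \<Rightarrow> ('g list \<times> 'h) \<Rightarrow> ('g list \<times> 'h)" where
  "gp_bracket bg bh \<mu> L \<xi> \<eta> =
     (map fst (map2 (sd_bracket bg bh L) (to_string \<mu> \<xi>) (to_string \<mu> \<eta>)), bh (snd \<xi>) (snd \<eta>))"

definition t_hat :: "('g \<Rightarrow> 'h::real_vector) \<Rightarrow> ('g list \<times> 'h) \<Rightarrow> 'h" where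
  "t_hat \<mu> \<xi> = snd \<xi> + sum_list (map \<mu> (fst \<xi>))"

text \<open>Face maps partial_k : g_{p+1} \<rightarrow> g_p, k = 0..p+1 (input lists of length p+1).\<close>
definition face :: "('g::real_vector \<Rightarrow> 'h::real_vector) \<Rightarrow> nat \<Rightarrow> nat \<Rightarrow> ('g list \<times> 'h) \<Rightarrow> ('g list \<times> 'h)" where
  "face \<mu> p k \<xi> =
     (if k = 0 then (tl (fst \<xi>), snd \<xi>)
      else if k \<le> p then
        (take (k - 1) (fst \<xi>) @ [fst \<xi> ! (k - 1) + fst \<xi> ! k] @ drop (k + 1) (fst \<xi>), snd \<xi>)
      else (butlast (fst \<xi>), snd \<xi> + \<mu> (last (fst \<xi>))))"

definition remove1_at :: "nat \<Rightarrow> 'a list \<Rightarrow> 'a list" where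
  "remove1_at j xs = take j xs @ drop (Suc j) xs"

definition remove2_at :: "nat \<Rightarrow> nat \<Rightarrow> 'a list \<Rightarrow> 'a list" where
  "remove2_at m n xs = remove1_at m (remove1_at n xs)"

text \<open>C^{p,q}_0: alternating q-multilinear maps g_p^q \<rightarrow> V, represented as functions
  on lists of elements of g_p (only values on lists of length q in gp_carrier p matter).\<close>
definition alt_multilinear :: "nat \<Rightarrow> nat \<Rightarrow> (('g::real_vector list \<times> 'h::real_vector) list \<Rightarrow> 'v::real_vector) \<Rightarrow> bool" where
  "alt_multilinear p q \<omega> \<longleftrightarrow>
     (\<forall>\<Xi> i a b c. length \<Xi> = q \<and> set \<Xi> \<subseteq> gp_carrier p \<and> i < q \<and>
        a \<in> gp_carrier p \<and> b \<in> gp_carrier p \<longrightarrow>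
        \<omega> (\<Xi>[i := gp_add a b]) = \<omega> (\<Xi>[i := a]) + \<omega> (\<Xi>[i := b]) \<and>
        \<omega> (\<Xi>[i := gp_scale c a]) = c *\<^sub>R \<omega> (\<Xi>[i := a])) \<and>
     (\<forall>\<Xi> i j. length \<Xi> = q \<and> set \<Xi> \<subseteq> gp_carrier p \<and> i < j \<and> j < q \<and> \<Xi> ! i = \<Xi> ! j
        \<longrightarrow> \<omega> \<Xi> = 0)"

definition ce_delta ::
  "('g::real_vector \<Rightarrow> 'g \<Rightarrow> 'g) \<Rightarrow> ('h::real_vector \<Rightarrow> 'h \<Rightarrow> 'h) \<Rightarrow> ('g \<Rightarrow> 'h) \<Rightarrow> ('h \<Rightarrow> 'g \<Rightarrow> 'g)
   \<Rightarrow> ('h \<Rightarrow> 'v::real_vector \<Rightarrow> 'v) \<Rightarrow> (('g list \<times> 'h) list \<Rightarrow> 'v) \<Rightarrow> ('g list \<times> 'h) list \<Rightarrow> 'v" where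
  "ce_delta bg bh \<mu> L r00 \<omega> \<Xi> =
     (\<Sum>j<length \<Xi>. ((-1) ^ j) *\<^sub>R r00 (t_hat \<mu> (\<Xi> ! j)) (\<omega> (remove1_at j \<Xi>))) +
     (\<Sum>(m, n)\<in>{(m, n). m < n \<and> n < length \<Xi>}.
        ((-1) ^ (m + n)) *\<^sub>R \<omega> (gp_bracket bg bh \<mu> L (\<Xi> ! m) (\<Xi> ! n) # remove2_at m n \<Xi>))"

definition simp_partial ::
  "('g::real_vector \<Rightarrow> 'h::real_vector) \<Rightarrow> nat \<Rightarrow> (('g list \<times> 'h) list \<Rightarrow> 'v::real_vector)
   \<Rightarrow> ('g list \<times> 'h) list \<Rightarrow> 'v" where
  "simp_partial \<mu> p \<omega> \<Xi> = (\<Sum>k\<in>{0..p+1}. ((-1) ^ k) *\<^sub>R \<omega> (map (face \<mu> p k) \<Xi>))"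

definition delta1 :: "('g \<Rightarrow> 'v \<Rightarrow> 'w) \<Rightarrow> ('c \<Rightarrow> 'v) \<Rightarrow> 'c \<Rightarrow> 'g \<Rightarrow> 'w" where
  "delta1 r1 \<omega> \<Xi> x = r1 x (\<omega> \<Xi>)"

definition Delta ::
  "('g::real_vector \<Rightarrow> 'h::real_vector) \<Rightarrow> nat \<Rightarrow> ('w::real_vector \<Rightarrow> 'v::real_vector)
   \<Rightarrow> (('g list \<times> 'h) list \<Rightarrow> 'g \<Rightarrow> 'w) \<Rightarrow> ('g list \<times> 'h) list \<Rightarrow> 'v" where
  "Delta \<mu> p \<phi> \<beta> \<Xi> =
     \<phi> (\<Sum>j<length \<Xi>. ((-1) ^ j) *\<^sub>R \<beta> (map (face \<mu> p 0) (remove1_at j \<Xi>)) (hd (fst (\<Xi> ! j))))"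

end

theory Submission
  imports Defs
begin

(* Under the identification of g_p with composable strings of arrows of the action groupoid
   g \<oplus>_L h, the face maps drop the first arrow, compose two adjacent arrows, or drop the last
   arrow.  Composition and the target map (x, y) \<mapsto> y + \<mu> x respect the semidirect bracket, so
   every face map is a Lie algebra homomorphism g_{p+1} \<rightarrow> g_p and \<partial> commutes with the
   bracket part of \<delta>.  In the action part, t_hat \<circ> \<partial>_k = t_hat except for k = 0, where
   \<mu>(x^0) is lost; as \<rho>_0^0(\<mu> x) = \<phi> \<rho>_1(x), this defect is exactly \<Delta> \<delta>_(1) \<omega>. *)

lemma sum_greaterThanLessThan_nth:
  "(\<Sum>k\<in>{j<..<length xs}. f (xs ! k)) = sum_list (map f (drop (Suc j) xs))"
  by (simp add: sum_list_sum_nth sum.atLeastLessThan_shift_0[of _ "Suc j"]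
      atLeastSucLessThan_greaterThanLessThan[symmetric] add.commute)

lemma sum_scaleR_sum_swap:
  fixes f :: "'j \<Rightarrow> 'k \<Rightarrow> 'a::real_vector"
  shows "(\<Sum>j\<in>J. c j *\<^sub>R (\<Sum>k\<in>K. d k *\<^sub>R f j k)) = (\<Sum>k\<in>K. d k *\<^sub>R (\<Sum>j\<in>J. c j *\<^sub>R f j k))"
  unfolding scaleR_sum_right scaleR_scaleR by (subst sum.swap) (simp add: mult.commute)

lemma sum_alternating_scaleR_if_eq_0:
  fixes f :: "'j \<Rightarrow> 'a::real_vector"
  shows "(\<Sum>k\<in>{0..n::nat}. (-1) ^ k *\<^sub>R (\<Sum>j\<in>J. c j *\<^sub>R (if k = 0 then f j else 0))) =
    (\<Sum>j\<in>J. c j *\<^sub>R f j)"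
proof -
  have "(-1) ^ k *\<^sub>R (\<Sum>j\<in>J. c j *\<^sub>R (if k = 0 then f j else 0)) =
      (if k = 0 then \<Sum>j\<in>J. c j *\<^sub>R f j else 0)" for k :: nat
    by simp
  then show ?thesis by (simp add: sum.delta)
qed

lemma drop_merge_adjacent:
  assumes "Suc i < length xs"
  shows "drop j (take i xs @ (xs ! i + xs ! Suc i) # drop (Suc (Suc i)) xs) =
    (if j \<le> i then drop j (take i xs) @ (xs ! i + xs ! Suc i) # drop (Suc (Suc i)) xs
     else drop (Suc j) xs)"
proof (cases "j \<le> i")
  case False
  then obtain d where "j = Suc (i + d)" by (metis add_Suc_right less_imp_Suc_add not_le)
  then show ?thesis using assms by (simp add: drop_append add.commute)
qed (use assms in \<open>simp add: drop_append\<close>)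

lemma sum_list_map_merge_adjacent:
  assumes \<mu>_add: "\<And>x x'. \<mu> (x + x') = \<mu> x + \<mu> x'" and i: "Suc i < length xs"
  shows "sum_list (map \<mu> (take i xs @ (xs ! i + xs ! Suc i) # drop (Suc (Suc i)) xs)) =
    sum_list (map \<mu> xs)"
proof -
  have "drop i xs = xs ! i # xs ! Suc i # drop (Suc (Suc i)) xs"
    using i by (simp add: Cons_nth_drop_Suc)
  then have "sum_list (map \<mu> (take i xs @ (xs ! i + xs ! Suc i) # drop (Suc (Suc i)) xs)) =
      sum_list (map \<mu> (take i xs @ drop i xs))"
    by (simp add: \<mu>_add add.assoc)
  then show ?thesis by simp
qed

lemma sum_list_map_butlast:
  "xs \<noteq> [] \<Longrightarrow> sum_list (map f xs) = sum_list (map f (butlast xs)) + f (last xs)"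
  by (cases xs rule: rev_cases) simp_all

lemma tl_map2: "tl (map2 f xs ys) = map2 f (tl xs) (tl ys)"
  by (cases xs; cases ys) simp_all

lemma butlast_map2:
  "length xs = length ys \<Longrightarrow> butlast (map2 f xs ys) = map2 f (butlast xs) (butlast ys)"
  by (induction xs ys rule: list_induct2) auto

lemma remove1_at_map: "remove1_at j (map f xs) = map f (remove1_at j xs)"
  by (simp add: remove1_at_def take_map drop_map)

lemma remove2_at_map: "remove2_at m n (map f xs) = map f (remove2_at m n xs)"
  by (simp add: remove2_at_def remove1_at_map)

section \<open>Strings of composable arrows\<close>

lemma length_to_string [simp]: "length (to_string \<mu> \<xi>) = length (fst \<xi>)"
  by (simp add: to_string_def)

lemma to_string_nth:
  "j < length xs \<Longrightarrow> to_string \<mu> (xs, y) ! j = (xs ! j, y + sum_list (map \<mu> (drop (Suc j) xs)))"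
  by (simp add: to_string_def sum_greaterThanLessThan_nth)

lemma to_string_composable:
  "Suc i < length xs \<Longrightarrow>
   to_string \<mu> (xs, y) ! i = (xs ! i, snd (to_string \<mu> (xs, y) ! Suc i) + \<mu> (xs ! Suc i))"
  by (simp add: to_string_nth Cons_nth_drop_Suc[symmetric] add_ac)

lemma to_string_tl: "to_string \<mu> (tl xs, y) = tl (to_string \<mu> (xs, y))"
  by (rule nth_equalityI) (auto simp: to_string_nth nth_tl drop_Suc tl_drop)

lemma to_string_butlast:
  "xs \<noteq> [] \<Longrightarrow> to_string \<mu> (butlast xs, y + \<mu> (last xs)) = butlast (to_string \<mu> (xs, y))"
proof (rule nth_equalityI)
  fix i assume "xs \<noteq> []" and "i < length (to_string \<mu> (butlast xs, y + \<mu> (last xs)))"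
  then have "drop (Suc i) xs = drop (Suc i) (butlast xs) @ [last xs]"
    by (metis append_butlast_last_id drop_append length_butlast Suc_leI diff_is_0_eq drop0
        fst_conv length_to_string)
  then show "to_string \<mu> (butlast xs, y + \<mu> (last xs)) ! i = butlast (to_string \<mu> (xs, y)) ! i"
    using \<open>i < _\<close> by (simp add: to_string_nth nth_butlast add_ac)
qed simp

lemma to_string_merge:
  assumes \<mu>_add: "\<And>x x'. \<mu> (x + x') = \<mu> x + \<mu> x'" and i: "Suc i < length xs"
  shows "to_string \<mu> (take i xs @ (xs ! i + xs ! Suc i) # drop (Suc (Suc i)) xs, y) =
    take i (to_string \<mu> (xs, y)) @ (xs ! i + xs ! Suc i, snd (to_string \<mu> (xs, y) ! Suc i)) #
    drop (Suc (Suc i)) (to_string \<mu> (xs, y))"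
proof (rule nth_equalityI)
  fix j assume "j < length (to_string \<mu> (take i xs @ (xs ! i + xs ! Suc i) # drop (Suc (Suc i)) xs, y))"
  then have j: "j < length xs - 1" using i by simp
  have split: "drop (Suc j) xs = drop (Suc j) (take i xs) @ xs ! i # xs ! Suc i # drop (Suc (Suc i)) xs"
    if "j < i"
  proof -
    have "drop (Suc j) xs = drop (Suc j) (take i xs @ drop i xs)" by simp
    also have "\<dots> = drop (Suc j) (take i xs) @ drop i xs"
      using that i by (simp only: drop_append length_take) simp
    also have "drop i xs = xs ! i # xs ! Suc i # drop (Suc (Suc i)) xs"
      using i by (simp add: Cons_nth_drop_Suc)
    finally show ?thesis .
  qed
  consider "j < i" | "j = i" | "i < j" by linarith
  then show "to_string \<mu> (take i xs @ (xs ! i + xs ! Suc i) # drop (Suc (Suc i)) xs, y) ! j =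
    (take i (to_string \<mu> (xs, y)) @ (xs ! i + xs ! Suc i, snd (to_string \<mu> (xs, y) ! Suc i)) #
    drop (Suc (Suc i)) (to_string \<mu> (xs, y))) ! j"
  proof cases
    case 1
    then show ?thesis
      using i j split by (simp add: to_string_nth nth_append drop_merge_adjacent \<mu>_add del: drop_append)
  next
    case 2
    then show ?thesis
      using i by (simp add: to_string_nth nth_append drop_merge_adjacent del: drop_append)
  next
    case 3
    then show ?thesis
      using i j by (simp add: to_string_nth nth_append drop_merge_adjacent del: drop_append)
  qed
qed (use i in simp)

section \<open>Face maps\<close>

lemma lie_algebra_antisym:
  assumes "lie_algebra br"
  shows "br x y = - br y x"
proof -
  have bil: "bilinear br" and alt: "\<And>z. br z z = 0"
    using assms by (auto simp: lie_algebra_def)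
  have "br (x + y) (x + y) = br x x + br x y + (br y x + br y y)"
    using bil by (simp add: bilinear_ladd bilinear_radd)
  then have "br x y + br y x = 0" by (simp add: alt)
  then show ?thesis by (simp add: eq_neg_iff_add_eq_0)
qed

(* (u, y + \<mu> v) and (v, y) are composable arrows with composite (u + v, y). *)
lemma sd_bracket_compose:
  assumes "crossed_module bg bh \<mu> L"
  shows "fst (sd_bracket bg bh L (u + v, y) (u' + v', y')) =
    fst (sd_bracket bg bh L (u, y + \<mu> v) (u', y' + \<mu> v')) + fst (sd_bracket bg bh L (v, y) (v', y'))"
proof -
  have bg: "bilinear bg" and bg_anti: "bg u v' = - bg v' u"
    and L_left: "\<And>x. linear (\<lambda>y. L y x)" and L_right: "\<And>y. linear (L y)"
    and L_\<mu>: "\<And>x x'. L (\<mu> x) x' = bg x x'"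
    using assms lie_algebra_antisym by (auto simp: crossed_module_def lie_algebra_def)
  show ?thesis
    by (simp add: sd_bracket_def bilinear_ladd[OF bg] bilinear_radd[OF bg] bg_anti
        linear_add[OF L_left] linear_add[OF L_right] L_\<mu> algebra_simps)
qed

lemma sd_bracket_target:
  assumes "crossed_module bg bh \<mu> L"
  shows "bh (snd a) (snd b) + \<mu> (fst (sd_bracket bg bh L a b)) =
    bh (snd a + \<mu> (fst a)) (snd b + \<mu> (fst b))"
proof -
  have bh: "bilinear bh" and bh_anti: "bh (snd b) (\<mu> (fst a)) = - bh (\<mu> (fst a)) (snd b)"
    and \<mu>: "linear \<mu>" and \<mu>_bg: "\<And>x x'. \<mu> (bg x x') = bh (\<mu> x) (\<mu> x')"
    and \<mu>_L: "\<And>y x. \<mu> (L y x) = bh y (\<mu> x)"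
    using assms lie_algebra_antisym by (auto simp: crossed_module_def lie_algebra_def lie_hom_def)
  show ?thesis
    by (simp add: sd_bracket_def bilinear_ladd[OF bh] bilinear_radd[OF bh] bh_anti
        linear_add[OF \<mu>] linear_diff[OF \<mu>] \<mu>_bg \<mu>_L algebra_simps)
qed

lemma gp_bracket_conv_map2:
  "gp_bracket bg bh \<mu> L \<xi> \<eta> =
    (map2 (\<lambda>a b. fst (sd_bracket bg bh L a b)) (to_string \<mu> \<xi>) (to_string \<mu> \<eta>), bh (snd \<xi>) (snd \<eta>))"
  by (simp add: gp_bracket_def case_prod_unfold)

lemma face_first_gp_bracket:
  "face \<mu> p 0 (gp_bracket bg bh \<mu> L \<xi> \<eta>) = gp_bracket bg bh \<mu> L (face \<mu> p 0 \<xi>) (face \<mu> p 0 \<eta>)"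
proof -
  obtain xs y xs' y' where "\<xi> = (xs, y)" "\<eta> = (xs', y')" by fastforce
  then show ?thesis
    by (simp add: face_def gp_bracket_conv_map2 to_string_tl tl_map2)
qed

lemma face_inner_gp_bracket:
  assumes cm: "crossed_module bg bh \<mu> L"
    and len: "length (fst \<xi>) = Suc p" "length (fst \<eta>) = Suc p" and i: "Suc i \<le> p"
  shows "face \<mu> p (Suc i) (gp_bracket bg bh \<mu> L \<xi> \<eta>) =
    gp_bracket bg bh \<mu> L (face \<mu> p (Suc i) \<xi>) (face \<mu> p (Suc i) \<eta>)"
proof -
  obtain xs y xs' y' where \<xi>: "\<xi> = (xs, y)" and \<eta>: "\<eta> = (xs', y')" by fastforce
  have \<mu>_add: "\<And>x x'. \<mu> (x + x') = \<mu> x + \<mu> x'"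
    using cm by (simp add: crossed_module_def lie_hom_def linear_add)
  define S T where "S = to_string \<mu> (xs, y)" and "T = to_string \<mu> (xs', y')"
  let ?f = "\<lambda>a b. fst (sd_bracket bg bh L a b)"
  have lens: "Suc i < length xs" "Suc i < length xs'" "Suc i < length S" "Suc i < length T"
    using len i by (simp_all add: \<xi> \<eta> S_def T_def)
  have merge: "?f (xs ! i + xs ! Suc i, snd (S ! Suc i)) (xs' ! i + xs' ! Suc i, snd (T ! Suc i)) =
      ?f (S ! i) (T ! i) + ?f (S ! Suc i) (T ! Suc i)"
    using lens by (simp add: S_def T_def to_string_composable sd_bracket_compose[OF cm]
        to_string_nth[of "Suc i"])
  show ?thesis
    using lens merge i
    by (simp add: \<xi> \<eta> face_def gp_bracket_conv_map2 to_string_merge[OF \<mu>_add]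
        take_map drop_map take_zip drop_zip nth_append min_def flip: S_def T_def)
qed

lemma face_last_gp_bracket:
  assumes cm: "crossed_module bg bh \<mu> L"
    and len: "length (fst \<xi>) = Suc p" "length (fst \<eta>) = Suc p"
  shows "face \<mu> p (Suc p) (gp_bracket bg bh \<mu> L \<xi> \<eta>) =
    gp_bracket bg bh \<mu> L (face \<mu> p (Suc p) \<xi>) (face \<mu> p (Suc p) \<eta>)"
proof -
  obtain xs y xs' y' where \<xi>: "\<xi> = (xs, y)" and \<eta>: "\<eta> = (xs', y')" by fastforce
  have last_string: "last (to_string \<mu> (zs, z)) = (last zs, z)" if "length zs = Suc p" for zs and z :: 'b
  proof -
    have "zs \<noteq> []" "to_string \<mu> (zs, z) \<noteq> []" using that by (auto simp flip: length_0_conv)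
    then show ?thesis using that by (simp add: last_conv_nth to_string_nth)
  qed
  show ?thesis
    using len sd_bracket_target[OF cm, of "(last xs, y)" "(last xs', y')"]
    by (simp add: \<xi> \<eta> face_def gp_bracket_conv_map2 to_string_butlast butlast_map2 last_map last_zip last_string
        flip: length_0_conv)
qed

lemma face_gp_bracket:
  assumes cm: "crossed_module bg bh \<mu> L" and k: "k \<le> Suc p"
    and carrier: "\<xi> \<in> gp_carrier (Suc p)" "\<eta> \<in> gp_carrier (Suc p)"
  shows "face \<mu> p k (gp_bracket bg bh \<mu> L \<xi> \<eta>) =
    gp_bracket bg bh \<mu> L (face \<mu> p k \<xi>) (face \<mu> p k \<eta>)"
proof -
  have len: "length (fst \<xi>) = Suc p" "length (fst \<eta>) = Suc p"
    using carrier by (simp_all add: gp_carrier_def)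
  consider "k = 0" | i where "k = Suc i" "Suc i \<le> p" | "k = Suc p"
    using k by (metis le_Suc_eq not0_implies_Suc)
  then show ?thesis
  proof cases
    case 1
    then show ?thesis by (simp add: face_first_gp_bracket)
  next
    case 2
    then show ?thesis using face_inner_gp_bracket[OF cm len] by simp
  next
    case 3
    then show ?thesis using face_last_gp_bracket[OF cm len] by simp
  qed
qed

lemma t_hat_face:
  assumes \<mu>_add: "\<And>x x'. \<mu> (x + x') = \<mu> x + \<mu> x'"
    and len: "length (fst \<xi>) = Suc p" and k: "k \<le> Suc p"
  shows "t_hat \<mu> (face \<mu> p k \<xi>) = t_hat \<mu> \<xi> - (if k = 0 then \<mu> (hd (fst \<xi>)) else 0)"
proof -
  obtain xs y where \<xi>: "\<xi> = (xs, y)" by fastforce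
  have xs: "xs \<noteq> []" using len by (auto simp: \<xi>)
  consider "k = 0" | i where "k = Suc i" "Suc i \<le> p" | "k = Suc p"
    using k by (metis le_Suc_eq not0_implies_Suc)
  then show ?thesis
  proof cases
    case 1
    then show ?thesis using xs by (cases xs) (simp_all add: \<xi> face_def t_hat_def)
  next
    case 2
    then show ?thesis
      using len sum_list_map_merge_adjacent[of \<mu> i xs, OF \<mu>_add] by (simp add: \<xi> face_def t_hat_def)
  next
    case 3
    then show ?thesis using sum_list_map_butlast[OF xs, of \<mu>] by (simp add: \<xi> face_def t_hat_def add_ac)
  qed
qed

section \<open>Commuting the simplicial and Chevalley-Eilenberg differentials\<close>

definition ce_action_part ::
  "('g \<Rightarrow> 'h::real_vector) \<Rightarrow> ('h \<Rightarrow> 'v \<Rightarrow> 'v::real_vector) \<Rightarrow> (('g list \<times> 'h) list \<Rightarrow> 'v)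
   \<Rightarrow> ('g list \<times> 'h) list \<Rightarrow> 'v" where
  "ce_action_part \<mu> r00 \<omega> \<Xi> =
     (\<Sum>j<length \<Xi>. ((-1) ^ j) *\<^sub>R r00 (t_hat \<mu> (\<Xi> ! j)) (\<omega> (remove1_at j \<Xi>)))"

definition ce_bracket_part ::
  "('g::real_vector \<Rightarrow> 'g \<Rightarrow> 'g) \<Rightarrow> ('h::real_vector \<Rightarrow> 'h \<Rightarrow> 'h) \<Rightarrow> ('g \<Rightarrow> 'h) \<Rightarrow> ('h \<Rightarrow> 'g \<Rightarrow> 'g)
   \<Rightarrow> (('g list \<times> 'h) list \<Rightarrow> 'v::real_vector) \<Rightarrow> ('g list \<times> 'h) list \<Rightarrow> 'v" where
  "ce_bracket_part bg bh \<mu> L \<omega> \<Xi> =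
     (\<Sum>(m, n)\<in>{(m, n). m < n \<and> n < length \<Xi>}.
        ((-1) ^ (m + n)) *\<^sub>R \<omega> (gp_bracket bg bh \<mu> L (\<Xi> ! m) (\<Xi> ! n) # remove2_at m n \<Xi>))"

lemma ce_delta_eq_parts:
  "ce_delta bg bh \<mu> L r00 \<omega> = (\<lambda>\<Xi>. ce_action_part \<mu> r00 \<omega> \<Xi> + ce_bracket_part bg bh \<mu> L \<omega> \<Xi>)"
  by (simp add: fun_eq_iff ce_delta_def ce_action_part_def ce_bracket_part_def)

lemma simp_partial_add:
  "simp_partial \<mu> p (\<lambda>\<Xi>. f \<Xi> + g \<Xi>) \<Xi> = simp_partial \<mu> p f \<Xi> + simp_partial \<mu> p g \<Xi>"
  by (simp add: simp_partial_def scaleR_add_right sum.distrib)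

lemma ce_bracket_part_simp_partial:
  assumes cm: "crossed_module bg bh \<mu> L" and carrier: "set \<Xi> \<subseteq> gp_carrier (Suc p)"
  shows "ce_bracket_part bg bh \<mu> L (simp_partial \<mu> p \<omega>) \<Xi> =
    simp_partial \<mu> p (ce_bracket_part bg bh \<mu> L \<omega>) \<Xi>"
proof -
  define I where "I = {(m, n). m < n \<and> n < length \<Xi>}"
  have face_bracket: "face \<mu> p k (gp_bracket bg bh \<mu> L (\<Xi> ! m) (\<Xi> ! n)) =
      gp_bracket bg bh \<mu> L (map (face \<mu> p k) \<Xi> ! m) (map (face \<mu> p k) \<Xi> ! n)"
    if "k \<in> {0..p + 1}" "(m, n) \<in> I" for k m n
  proof -
    have "\<Xi> ! m \<in> gp_carrier (Suc p)" "\<Xi> ! n \<in> gp_carrier (Suc p)"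
      using that carrier nth_mem by (fastforce simp: I_def)+
    then show ?thesis using that face_gp_bracket[OF cm] by (auto simp: I_def)
  qed
  define B where "B mn k = \<omega> (map (face \<mu> p k)
      (gp_bracket bg bh \<mu> L (\<Xi> ! fst mn) (\<Xi> ! snd mn) # remove2_at (fst mn) (snd mn) \<Xi>))"
    for mn k
  have "ce_bracket_part bg bh \<mu> L (simp_partial \<mu> p \<omega>) \<Xi> =
      (\<Sum>mn\<in>I. (-1) ^ (fst mn + snd mn) *\<^sub>R (\<Sum>k\<in>{0..p + 1}. (-1) ^ k *\<^sub>R B mn k))"
    by (simp add: ce_bracket_part_def simp_partial_def I_def B_def case_prod_unfold)
  also have "\<dots> = (\<Sum>k\<in>{0..p + 1}. (-1) ^ k *\<^sub>R (\<Sum>mn\<in>I. (-1) ^ (fst mn + snd mn) *\<^sub>R B mn k))"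
    by (rule sum_scaleR_sum_swap)
  also have "\<dots> = simp_partial \<mu> p (ce_bracket_part bg bh \<mu> L \<omega>) \<Xi>"
    unfolding simp_partial_def ce_bracket_part_def
    by (intro sum.cong refl arg_cong2[where f = "(*\<^sub>R)"])
       (auto simp: I_def B_def case_prod_unfold face_bracket remove2_at_map)
  finally show ?thesis .
qed

lemma ce_action_part_simp_partial:
  assumes \<mu>_add: "\<And>x x'. \<mu> (x + x') = \<mu> x + \<mu> x'" and r00: "bilinear r00"
    and carrier: "set \<Xi> \<subseteq> gp_carrier (Suc p)"
  shows "ce_action_part \<mu> r00 (simp_partial \<mu> p \<omega>) \<Xi> =
    simp_partial \<mu> p (ce_action_part \<mu> r00 \<omega>) \<Xi> +
    (\<Sum>j<length \<Xi>. (-1) ^ j *\<^sub>R r00 (\<mu> (hd (fst (\<Xi> ! j)))) (\<omega> (map (face \<mu> p 0) (remove1_at j \<Xi>))))"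
proof -
  define A where "A j k = r00 (t_hat \<mu> (\<Xi> ! j)) (\<omega> (map (face \<mu> p k) (remove1_at j \<Xi>)))" for j k
  define c where "c j = r00 (\<mu> (hd (fst (\<Xi> ! j)))) (\<omega> (map (face \<mu> p 0) (remove1_at j \<Xi>)))" for j
  have r00_left: "\<And>v. linear (\<lambda>y. r00 y v)" and r00_right: "\<And>y. linear (r00 y)"
    using r00 by (simp_all add: bilinear_def)
  have lhs: "ce_action_part \<mu> r00 (simp_partial \<mu> p \<omega>) \<Xi> =
      (\<Sum>j<length \<Xi>. (-1) ^ j *\<^sub>R (\<Sum>k\<in>{0..p + 1}. (-1) ^ k *\<^sub>R A j k))"
    by (simp only: ce_action_part_def simp_partial_def A_def linear_sum[OF r00_right]
        linear_scale[OF r00_right])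
  have face_term: "r00 (t_hat \<mu> (face \<mu> p k (\<Xi> ! j))) (\<omega> (remove1_at j (map (face \<mu> p k) \<Xi>))) =
      A j k - (if k = 0 then c j else 0)"
    if "j < length \<Xi>" "k \<in> {0..p + 1}" for j k
  proof -
    have "length (fst (\<Xi> ! j)) = Suc p"
      using that carrier nth_mem by (fastforce simp: gp_carrier_def)
    then show ?thesis
      using that t_hat_face[OF \<mu>_add, of "\<Xi> ! j" p k]
      by (simp add: A_def c_def remove1_at_map linear_diff[OF r00_left] linear_0[OF r00_left])
  qed
  have rhs: "simp_partial \<mu> p (ce_action_part \<mu> r00 \<omega>) \<Xi> =
      (\<Sum>k\<in>{0..p + 1}. (-1) ^ k *\<^sub>R (\<Sum>j<length \<Xi>. (-1) ^ j *\<^sub>R (A j k - (if k = 0 then c j else 0))))"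
    unfolding simp_partial_def ce_action_part_def length_map
    by (intro sum.cong refl arg_cong2[where f = "(*\<^sub>R)"]) (simp add: face_term)
  have "simp_partial \<mu> p (ce_action_part \<mu> r00 \<omega>) \<Xi> =
      (\<Sum>k\<in>{0..p + 1}. (-1) ^ k *\<^sub>R (\<Sum>j<length \<Xi>. (-1) ^ j *\<^sub>R A j k)) -
      (\<Sum>k\<in>{0..p + 1}. (-1) ^ k *\<^sub>R (\<Sum>j<length \<Xi>. (-1) ^ j *\<^sub>R (if k = 0 then c j else 0)))"
    unfolding rhs by (simp only: scaleR_diff_right sum_subtractf)
  also have "(\<Sum>k\<in>{0..p + 1}. (-1) ^ k *\<^sub>R (\<Sum>j<length \<Xi>. (-1) ^ j *\<^sub>R (if k = 0 then c j else 0))) =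
      (\<Sum>j<length \<Xi>. (-1) ^ j *\<^sub>R c j)"
    by (rule sum_alternating_scaleR_if_eq_0)
  also have "(\<Sum>k\<in>{0..p + 1}. (-1) ^ k *\<^sub>R (\<Sum>j<length \<Xi>. (-1) ^ j *\<^sub>R A j k)) =
      ce_action_part \<mu> r00 (simp_partial \<mu> p \<omega>) \<Xi>"
    unfolding lhs by (rule sum_scaleR_sum_swap[symmetric])
  finally show ?thesis by (simp add: c_def)
qed

lemma ce_delta_simp_partial:
  assumes cm: "crossed_module bg bh \<mu> L" and r00: "bilinear r00"
    and carrier: "set \<Xi> \<subseteq> gp_carrier (Suc p)"
  shows "ce_delta bg bh \<mu> L r00 (simp_partial \<mu> p \<omega>) \<Xi> =
    simp_partial \<mu> p (ce_delta bg bh \<mu> L r00 \<omega>) \<Xi> +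
    (\<Sum>j<length \<Xi>. (-1) ^ j *\<^sub>R r00 (\<mu> (hd (fst (\<Xi> ! j)))) (\<omega> (map (face \<mu> p 0) (remove1_at j \<Xi>))))"
proof -
  have \<mu>_add: "\<And>x x'. \<mu> (x + x') = \<mu> x + \<mu> x'"
    using cm by (simp add: crossed_module_def lie_hom_def linear_add)
  show ?thesis
    by (simp add: ce_delta_eq_parts simp_partial_add ce_action_part_simp_partial[OF \<mu>_add r00 carrier]
        ce_bracket_part_simp_partial[OF cm carrier] add_ac)
qed

theorem mainTheorem9:
  fixes bg :: "'g::real_vector \<Rightarrow> 'g \<Rightarrow> 'g" and bh :: "'h::real_vector \<Rightarrow> 'h \<Rightarrow> 'h"
    and \<mu> :: "'g \<Rightarrow> 'h" and L :: "'h \<Rightarrow> 'g \<Rightarrow> 'g"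
    and \<phi> :: "'w::real_vector \<Rightarrow> 'v::real_vector"
    and r01 :: "'h \<Rightarrow> 'w \<Rightarrow> 'w" and r00 :: "'h \<Rightarrow> 'v \<Rightarrow> 'v" and r1 :: "'g \<Rightarrow> 'v \<Rightarrow> 'w"
    and p q :: nat
    and \<omega> :: "('g list \<times> 'h) list \<Rightarrow> 'v"
    and \<Xi> :: "('g list \<times> 'h) list"
  assumes "crossed_module bg bh \<mu> L"
    and "two_representation bg bh \<mu> L \<phi> r01 r00 r1"
    and "alt_multilinear p q \<omega>"
    and "length \<Xi> = q + 1"
    and "set \<Xi> \<subseteq> gp_carrier (p + 1)"
  shows "ce_delta bg bh \<mu> L r00 (simp_partial \<mu> p \<omega>) \<Xi> =
           simp_partial \<mu> p (ce_delta bg bh \<mu> L r00 \<omega>) \<Xi> +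
           \<phi> (\<Sum>j<q + 1. ((-1) ^ j) *\<^sub>R r1 (hd (fst (\<Xi> ! j))) (\<omega> (map (face \<mu> p 0) (remove1_at j \<Xi>)))) \<and>
         ce_delta bg bh \<mu> L r00 (simp_partial \<mu> p \<omega>) \<Xi> =
           simp_partial \<mu> p (ce_delta bg bh \<mu> L r00 \<omega>) \<Xi> +
           Delta \<mu> p \<phi> (delta1 r1 \<omega>) \<Xi>"
proof -
  have r00: "bilinear r00" and \<phi>: "linear \<phi>" and r00_\<mu>: "\<And>x v. r00 (\<mu> x) v = \<phi> (r1 x v)"
    using assms(2) by (simp_all add: two_representation_def representation_def bilinear_def)
  have carrier: "set \<Xi> \<subseteq> gp_carrier (Suc p)"
    using assms(5) by simp
  have correction:
    "(\<Sum>j<length \<Xi>. (-1) ^ j *\<^sub>R r00 (\<mu> (hd (fst (\<Xi> ! j)))) (\<omega> (map (face \<mu> p 0) (remove1_at j \<Xi>)))) =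
     \<phi> (\<Sum>j<q + 1. ((-1) ^ j) *\<^sub>R r1 (hd (fst (\<Xi> ! j))) (\<omega> (map (face \<mu> p 0) (remove1_at j \<Xi>))))"
    by (simp only: assms(4) r00_\<mu> linear_sum[OF \<phi>] linear_scale[OF \<phi>])
  have "Delta \<mu> p \<phi> (delta1 r1 \<omega>) \<Xi> =
     \<phi> (\<Sum>j<q + 1. ((-1) ^ j) *\<^sub>R r1 (hd (fst (\<Xi> ! j))) (\<omega> (map (face \<mu> p 0) (remove1_at j \<Xi>))))"
    by (simp add: Delta_def delta1_def assms(4))
  then show ?thesis
    using ce_delta_simp_partial[OF assms(1) r00 carrier, of \<omega>] correction by simp
qed

end
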